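(* Let $M\models\mathrm{AA}_0$ and $x,y\in M$. Then $x\le y$ if and only if there exists $t\in M$ such that $x+t=y$; moreover such $t$ is unique.
   Context: Structures are complete metric spaces of diameter at most $1$ in $L=\{+,\cdot,\wedge,\vee,0,1\}$ (operations $1$-Lipschitz, $d$ the only relation symbol); affine conditions use formulas built from $1$ and $d(t_1,t_2)$ via $+$, real scalar multiples, $\sup$, $\inf$, free variables universally quantified. $|x|=d(x,0)$; $x\le y$ means $x\wedge y=x$; $nx$, $x^n$ iterated sum/product. $\mathrm{AA}_0$ consists of: (A1) the identities of the nonnegative part of a lattice-ordered commutative ring with identity (commutative semiring axioms, lattice axioms, distributivity of $+,\cdot$ over $\wedge,\vee$, $0\le x$); (A2) $\inf_y d(x,(x\wedge y)+1)=1-|x|$ and $x\le x^2$; (A3) $d(x+z,y+z)=d(x,y)$; (A4) $d(y,z)\le d(xy,xz)+1-|x|$; (A5) $d(xy,xz)=d(x^ny,x^nz)\le d(y,z)$; (A6) $d(nx,ny)=d(x^n,y^n)=d(x,y)$, $n\ge1$; (A7) $|x\wedge y|+|x\vee y|=|x|+|y|$; (A8) $|xy+z|=|(x\wedge y)+z|$; (A9) $|x+y+z|=|(x\vee y)+z|$; (A10) $\inf_t d((x\wedge y)+t,y)=0$. *)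

theory Defs
  imports Complex_Main
begin

text \<open>A structure in the language L = {+, *, inf, sup, 0, 1} with metric d,
  given by its components: metric d, addition pl, multiplication ml,
  meet mn, join mx, constants z (zero) and u (one).\<close>

definition iter :: "('a \<Rightarrow> 'a \<Rightarrow> 'a) \<Rightarrow> 'a \<Rightarrow> nat \<Rightarrow> 'a" where
  "iter op x n = ((op x) ^^ (n - 1)) x"

definition aa_le :: "('a \<Rightarrow> 'a \<Rightarrow> 'a) \<Rightarrow> 'a \<Rightarrow> 'a \<Rightarrow> bool" where
  "aa_le mn x y \<longleftrightarrow> mn x y = x"

definition complete_metric_le1 :: "('a \<Rightarrow> 'a \<Rightarrow> real) \<Rightarrow> bool" where
  "complete_metric_le1 d \<longleftrightarrow>
     (\<forall>x y. d x y = 0 \<longleftrightarrow> x = y) \<and>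
     (\<forall>x y. d x y = d y x) \<and>
     (\<forall>x y w. d x w \<le> d x y + d y w) \<and>
     (\<forall>x y. d x y \<le> 1) \<and>
     (\<forall>f :: nat \<Rightarrow> 'a.
        (\<forall>e>0. \<exists>N. \<forall>m\<ge>N. \<forall>n\<ge>N. d (f m) (f n) < e) \<longrightarrow>
        (\<exists>l. \<forall>e>0. \<exists>N. \<forall>n\<ge>N. d (f n) l < e))"

definition lip1 :: "('a \<Rightarrow> 'a \<Rightarrow> real) \<Rightarrow> ('a \<Rightarrow> 'a \<Rightarrow> 'a) \<Rightarrow> bool" where
  "lip1 d op \<longleftrightarrow> (\<forall>x y x' y'. d (op x y) (op x' y') \<le> max (d x x') (d y y'))"

definition L_structure ::
  "('a \<Rightarrow> 'a \<Rightarrow> real) \<Rightarrow> ('a \<Rightarrow> 'a \<Rightarrow> 'a) \<Rightarrow> ('a \<Rightarrow> 'a \<Rightarrow> 'a) \<Rightarrow>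
   ('a \<Rightarrow> 'a \<Rightarrow> 'a) \<Rightarrow> ('a \<Rightarrow> 'a \<Rightarrow> 'a) \<Rightarrow> 'a \<Rightarrow> 'a \<Rightarrow> bool" where
  "L_structure d pl ml mn mx z u \<longleftrightarrow>
     complete_metric_le1 d \<and> lip1 d pl \<and> lip1 d ml \<and> lip1 d mn \<and> lip1 d mx"

text \<open>(A1): identities of the nonnegative part of a lattice-ordered commutative ring
  with identity: commutative semiring axioms, lattice axioms, distributivity of
  + and * over meet and join, and 0 \<le> x.\<close>
definition AA_A1 ::
  "('a \<Rightarrow> 'a \<Rightarrow> 'a) \<Rightarrow> ('a \<Rightarrow> 'a \<Rightarrow> 'a) \<Rightarrow>
   ('a \<Rightarrow> 'a \<Rightarrow> 'a) \<Rightarrow> ('a \<Rightarrow> 'a \<Rightarrow> 'a) \<Rightarrow> 'a \<Rightarrow> 'a \<Rightarrow> bool" where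
  "AA_A1 pl ml mn mx z u \<longleftrightarrow>
     \<comment> \<open>commutative semiring with 1\<close>
     (\<forall>x y w. pl (pl x y) w = pl x (pl y w)) \<and>
     (\<forall>x y. pl x y = pl y x) \<and>
     (\<forall>x. pl x z = x) \<and>
     (\<forall>x y w. ml (ml x y) w = ml x (ml y w)) \<and>
     (\<forall>x y. ml x y = ml y x) \<and>
     (\<forall>x. ml x u = x) \<and>
     (\<forall>x. ml x z = z) \<and>
     (\<forall>x y w. ml x (pl y w) = pl (ml x y) (ml x w)) \<and>
     \<comment> \<open>lattice\<close>
     (\<forall>x y w. mn (mn x y) w = mn x (mn y w)) \<and>
     (\<forall>x y. mn x y = mn y x) \<and>
     (\<forall>x. mn x x = x) \<and>
     (\<forall>x y w. mx (mx x y) w = mx x (mx y w)) \<and>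
     (\<forall>x y. mx x y = mx y x) \<and>
     (\<forall>x. mx x x = x) \<and>
     (\<forall>x y. mn x (mx x y) = x) \<and>
     (\<forall>x y. mx x (mn x y) = x) \<and>
     \<comment> \<open>distributivity of + and * over meet and join\<close>
     (\<forall>x y w. pl x (mn y w) = mn (pl x y) (pl x w)) \<and>
     (\<forall>x y w. pl x (mx y w) = mx (pl x y) (pl x w)) \<and>
     (\<forall>x y w. ml x (mn y w) = mn (ml x y) (ml x w)) \<and>
     (\<forall>x y w. ml x (mx y w) = mx (ml x y) (ml x w)) \<and>
     \<comment> \<open>0 \<le> x\<close>
     (\<forall>x. aa_le mn z x)"

definition AA0 ::
  "('a \<Rightarrow> 'a \<Rightarrow> real) \<Rightarrow> ('a \<Rightarrow> 'a \<Rightarrow> 'a) \<Rightarrow> ('a \<Rightarrow> 'a \<Rightarrow> 'a) \<Rightarrow>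
   ('a \<Rightarrow> 'a \<Rightarrow> 'a) \<Rightarrow> ('a \<Rightarrow> 'a \<Rightarrow> 'a) \<Rightarrow> 'a \<Rightarrow> 'a \<Rightarrow> bool" where
  "AA0 d pl ml mn mx z u \<longleftrightarrow>
     L_structure d pl ml mn mx z u \<and>
     \<comment> \<open>(A1)\<close>
     AA_A1 pl ml mn mx z u \<and>
     \<comment> \<open>(A2)\<close>
     (\<forall>x. (INF y. d x (pl (mn x y) u)) = 1 - d x z) \<and>
     (\<forall>x. aa_le mn x (ml x x)) \<and>
     \<comment> \<open>(A3)\<close>
     (\<forall>x y w. d (pl x w) (pl y w) = d x y) \<and>
     \<comment> \<open>(A4)\<close>
     (\<forall>x y w. d y w \<le> d (ml x y) (ml x w) + 1 - d x z) \<and>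
     \<comment> \<open>(A5)\<close>
     (\<forall>n\<ge>1. \<forall>x y w.
        d (ml x y) (ml x w) = d (ml (iter ml x n) y) (ml (iter ml x n) w) \<and>
        d (ml (iter ml x n) y) (ml (iter ml x n) w) \<le> d y w) \<and>
     \<comment> \<open>(A6)\<close>
     (\<forall>n\<ge>1. \<forall>x y.
        d (iter pl x n) (iter pl y n) = d (iter ml x n) (iter ml y n) \<and>
        d (iter ml x n) (iter ml y n) = d x y) \<and>
     \<comment> \<open>(A7)\<close>
     (\<forall>x y. d (mn x y) z + d (mx x y) z = d x z + d y z) \<and>
     \<comment> \<open>(A8)\<close>
     (\<forall>x y w. d (pl (ml x y) w) z = d (pl (mn x y) w) z) \<and>
     \<comment> \<open>(A9)\<close>
     (\<forall>x y w. d (pl (pl x y) w) z = d (pl (mx x y) w) z) \<and>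
     \<comment> \<open>(A10)\<close>
     (\<forall>x y. (INF t. d (pl (mn x y) t) y) = 0)"

end

theory Submission
  imports Defs "HOL-Analysis.Abstract_Metric_Spaces"
begin

text \<open>The inequality \<open>x \<le> x + t\<close> is an identity of (A1): the meet of \<open>x\<close> and \<open>x + t\<close>
  is \<open>x + (0 \<sqinter> t) = x\<close>. By (A3) the translation \<open>t \<mapsto> x + t\<close> is an isometry, so it is
  injective and, the space being complete, has closed range. If \<open>x \<le> y\<close>, i.e. \<open>x \<sqinter> y = x\<close>,
  then (A10) says that \<open>y\<close> lies in the closure of that range, hence in the range itself.\<close>

lemma complete_metric_le1_imp_Metric_space:
  assumes "complete_metric_le1 d"
  shows "Metric_space UNIV d"
proof
  have zero: "d x y = 0 \<longleftrightarrow> x = y" and commute: "d x y = d y x"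
    and triangle: "d x w \<le> d x y + d y w" for x y w
    using assms unfolding complete_metric_le1_def by blast+
  show "d x y = d y x" "d x w \<le> d x y + d y w" "d x y = 0 \<longleftrightarrow> x = y" for x y w
    using zero commute triangle by blast+
  show "0 \<le> d x y" for x y
  proof -
    have "d x x \<le> d x y + d y x"
      by (rule triangle)
    moreover have "d x x = 0"
      by (simp add: zero)
    ultimately show ?thesis
      using commute[of x y] by linarith
  qed
qed

lemma complete_metric_le1_imp_mcomplete:
  assumes "complete_metric_le1 d"
  shows "Metric_space.mcomplete UNIV d"
proof -
  interpret Metric_space UNIV d
    using assms by (rule complete_metric_le1_imp_Metric_space)
  show ?thesis
    using assms
    unfolding mcomplete_def MCauchy_def limitin_metric eventually_sequentially
      complete_metric_le1_def
    by auto
qed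

context Metric_space
begin

lemma closedin_isometry_range:
  assumes complete: mcomplete and f: "f \<in> M \<rightarrow> M"
    and isometry: "\<And>a b. a \<in> M \<Longrightarrow> b \<in> M \<Longrightarrow> d (f a) (f b) = d a b"
  shows "closedin mtopology (f ` M)"
  unfolding metric_closedin_iff_sequentially_closed
proof (intro conjI allI impI)
  show "f ` M \<subseteq> M"
    using f by auto
  fix \<sigma> l
  assume "range \<sigma> \<subseteq> f ` M \<and> limitin mtopology \<sigma> l sequentially"
  then have range_\<sigma>: "range \<sigma> \<subseteq> f ` M" and lim_\<sigma>: "limitin mtopology \<sigma> l sequentially"
    by auto
  have "\<forall>n. \<exists>t\<in>M. \<sigma> n = f t"
    using range_\<sigma> by blast
  then obtain \<tau> where \<tau>: "\<And>n. \<tau> n \<in> M" "\<And>n. \<sigma> n = f (\<tau> n)"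
    by metis
  have \<sigma>_in_M: "\<sigma> n \<in> M" for n
    using \<tau> f by auto
  have dist_\<tau>: "d (\<tau> m) (\<tau> n) = d (\<sigma> m) (\<sigma> n)" for m n
    using \<tau> isometry by simp
  have "MCauchy \<sigma>"
    using \<sigma>_in_M lim_\<sigma> by (intro convergent_imp_MCauchy) auto
  then have "MCauchy \<tau>"
    using \<tau>(1) unfolding MCauchy_def dist_\<tau> by blast
  then obtain l' where lim_\<tau>: "limitin mtopology \<tau> l' sequentially"
    using complete unfolding mcomplete_def by blast
  then have "l' \<in> M"
    by (rule limitin_mspace)
  have "d (\<sigma> n) (f l') = d (\<tau> n) l'" for n
    using \<tau> isometry \<open>l' \<in> M\<close> by simp
  moreover have "f l' \<in> M"
    using f \<open>l' \<in> M\<close> by auto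
  ultimately have "limitin mtopology \<sigma> (f l') sequentially"
    using lim_\<tau> \<sigma>_in_M \<tau>(1) unfolding limitin_metric by simp
  with lim_\<sigma> have "l = f l'"
    by (meson limitin_metric_unique trivial_limit_sequentially)
  with \<open>l' \<in> M\<close> show "l \<in> f ` M"
    by blast
qed

lemma in_isometry_range_if_INF_dist_eq_0:
  assumes complete: mcomplete and f: "f \<in> M \<rightarrow> M"
    and isometry: "\<And>a b. a \<in> M \<Longrightarrow> b \<in> M \<Longrightarrow> d (f a) (f b) = d a b"
    and "y \<in> M" and inf: "(INF t\<in>M. d (f t) y) = 0"
  shows "y \<in> f ` M"
proof -
  have "M \<noteq> {}"
    using \<open>y \<in> M\<close> by blast
  have "\<exists>s\<in>f ` M. s \<in> mball y r" if "r > 0" for r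
  proof -
    have "Inf ((\<lambda>t. d (f t) y) ` M) < r"
      using inf that by simp
    then obtain t where "t \<in> M" "d (f t) y < r"
      using cInf_lessD[of "(\<lambda>t. d (f t) y) ` M" r] \<open>M \<noteq> {}\<close> by blast
    then show ?thesis
      using f \<open>y \<in> M\<close> commute[of y "f t"] by auto
  qed
  then have "y \<in> mtopology closure_of (f ` M)"
    using \<open>y \<in> M\<close> unfolding metric_closure_of by blast
  then show ?thesis
    using closedin_isometry_range[OF complete f isometry] closure_of_closedin by metis
qed

end

lemma AA0_imp_complete_metric_le1:
  "AA0 d pl ml mn mx z u \<Longrightarrow> complete_metric_le1 d"
  unfolding AA0_def L_structure_def by (elim conjE)

lemma AA0_dist_add_left:
  assumes "AA0 d pl ml mn mx z u"
  shows "d (pl x a) (pl x b) = d a b"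
proof -
  have translation: "\<forall>x y w. d (pl x w) (pl y w) = d x y"
    using assms unfolding AA0_def by (elim conjE)
  have add_commute: "\<forall>x y. pl x y = pl y x"
    using assms unfolding AA0_def AA_A1_def by (elim conjE)
  have "d (pl x a) (pl x b) = d (pl a x) (pl b x)"
    by (simp only: add_commute[rule_format, of x])
  also have "\<dots> = d a b"
    using translation by blast
  finally show ?thesis .
qed

lemma AA0_add_left_cancel:
  assumes "AA0 d pl ml mn mx z u"
  shows "pl x a = pl x b \<longleftrightarrow> a = b"
proof -
  interpret Metric_space UNIV d
    using assms by (intro complete_metric_le1_imp_Metric_space AA0_imp_complete_metric_le1)
  show ?thesis
    using AA0_dist_add_left[OF assms, of x a b] zero[of a b] by auto
qed

lemma AA_A1_le_add:
  assumes "AA_A1 pl ml mn mx z u"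
  shows "aa_le mn x (pl x t)"
proof -
  have distrib: "\<forall>x y w. pl x (mn y w) = mn (pl x y) (pl x w)"
    using assms unfolding AA_A1_def by (elim conjE)
  have add_0: "\<forall>x. pl x z = x"
    using assms unfolding AA_A1_def by (elim conjE)
  have "\<forall>x. aa_le mn z x"
    using assms unfolding AA_A1_def by (elim conjE)
  then have zero_meet: "mn z t = z"
    unfolding aa_le_def by blast
  have "mn x (pl x t) = mn (pl x z) (pl x t)"
    using add_0 by simp
  also have "\<dots> = pl x (mn z t)"
    using distrib by simp
  also have "\<dots> = x"
    using add_0 by (simp add: zero_meet)
  finally show ?thesis
    unfolding aa_le_def .
qed

lemma AA0_le_imp_ex_add:
  assumes AA0: "AA0 d pl ml mn mx z u" and "aa_le mn x y"
  shows "\<exists>t. pl x t = y"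
proof -
  interpret Metric_space UNIV d
    using AA0 by (intro complete_metric_le1_imp_Metric_space AA0_imp_complete_metric_le1)
  have "\<forall>x y. (INF t. d (pl (mn x y) t) y) = 0"
    using AA0 unfolding AA0_def by (elim conjE)
  then have "(INF t. d (pl (mn x y) t) y) = 0"
    by blast
  then have "(INF t. d (pl x t) y) = 0"
    using \<open>aa_le mn x y\<close> unfolding aa_le_def by simp
  moreover have mcomplete
    using AA0 by (intro complete_metric_le1_imp_mcomplete AA0_imp_complete_metric_le1)
  ultimately have "y \<in> range (pl x)"
    using in_isometry_range_if_INF_dist_eq_0[of "pl x" y] AA0_dist_add_left[OF AA0] by auto
  then show ?thesis
    by auto
qed

theorem mainTheorem18:
  assumes "AA0 d pl ml mn mx z u"
  shows "(aa_le mn x y \<longleftrightarrow> (\<exists>t. pl x t = y)) \<and>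
         (\<forall>t t'. pl x t = y \<longrightarrow> pl x t' = y \<longrightarrow> t = t')"
proof -
  have "AA_A1 pl ml mn mx z u"
    using assms unfolding AA0_def by (elim conjE)
  then have "aa_le mn x y" if "pl x t = y" for t
    using that AA_A1_le_add[of pl ml mn mx z u x t] by simp
  then show ?thesis
    using AA0_le_imp_ex_add[OF assms] AA0_add_left_cancel[OF assms] by blast
qed

end
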